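(* For positive integers $n,m$, $H(n,m)=0$ if $m>n$, $H(n,m)=1$ if $m=n$, and $H(n,m)=1$ if $m=1$. In all other cases $n>m>1$, \[H(n,m)=\sum_{j=1}^{n-m}H(n-m,j)\binom{m-1}{j-1}.\]
   Context: A composition of a positive integer $n$ is an ordered tuple $(c_1,\ldots,c_m)$ of positive integers with $c_1+\cdots+c_m=n$; it has $m$ parts. It is headstrong if $c_1\ge c_i$ for all $i$. $H(n,m)$ denotes the number of headstrong compositions of $n$ with exactly $m$ parts. *)

theory Defs
  imports Main
begin

definition is_composition :: "nat \<Rightarrow> nat list \<Rightarrow> bool" where
  "is_composition n cs \<longleftrightarrow> (\<forall>c\<in>set cs. c > 0) \<and> sum_list cs = n"

definition headstrong :: "nat list \<Rightarrow> bool" where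
  "headstrong cs \<longleftrightarrow> cs \<noteq> [] \<and> (\<forall>i<length cs. cs ! 0 \<ge> cs ! i)"

definition H :: "nat \<Rightarrow> nat \<Rightarrow> nat" where
  "H n m = card {cs. is_composition n cs \<and> length cs = m \<and> headstrong cs}"

end

theory Submission
  imports Defs
begin

text \<open>
  Subtracting 1 from every part identifies headstrong compositions of \<open>n\<close> with \<open>m\<close> parts
  with headstrong weak compositions of \<open>k = n - m\<close> with \<open>m\<close> parts. Such a weak composition
  has a first part \<open>a\<close> followed by a weak composition of \<open>k - a\<close> into \<open>m - 1\<close> parts
  bounded by \<open>a\<close>; if \<open>k > 0\<close>, then \<open>a > 0\<close>. Recording only the \<open>j - 1\<close> nonzero parts after
  the first one, and choosing their positions among the \<open>m - 1\<close> slots, turns the sum over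
  \<open>a\<close> into the sum over \<open>j\<close> of \<open>H k j\<close> times \<open>(m - 1) choose (j - 1)\<close>.
\<close>

lemma length_le_sum_list_pos:
  "(\<forall>c\<in>set cs. (0::nat) < c) \<Longrightarrow> length cs \<le> sum_list cs"
  by (induction cs) auto

lemma finite_lists_sum_eq:
  "finite {ys :: nat list. length ys = r \<and> sum_list ys = k \<and> R ys}"
proof (rule finite_subset)
  show "{ys :: nat list. length ys = r \<and> sum_list ys = k \<and> R ys}
          \<subseteq> {ys. set ys \<subseteq> {0..k} \<and> length ys = r}"
    using member_le_sum_list by fastforce
  show "finite {ys. set ys \<subseteq> {0..k::nat} \<and> length ys = r}"
    by (rule finite_lists_length_eq) simp
qed

lemma card_eq_sum_card_Cons:
  assumes "finite A" "finite C" "\<forall>xs\<in>A. xs \<noteq> [] \<and> hd xs \<in> C"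
  shows "card A = (\<Sum>c\<in>C. card {ys. c # ys \<in> A})"
proof -
  have A_eq: "A = (\<Union>c\<in>C. Cons c ` {ys. c # ys \<in> A})"
  proof
    show "A \<subseteq> (\<Union>c\<in>C. Cons c ` {ys. c # ys \<in> A})"
    proof
      fix xs assume "xs \<in> A"
      with assms(3) show "xs \<in> (\<Union>c\<in>C. Cons c ` {ys. c # ys \<in> A})"
        by (cases xs) force+
    qed
  qed auto
  have "finite {ys. c # ys \<in> A}" for c
    by (rule finite_surj[OF assms(1), of _ tl]) force
  then have "card A = (\<Sum>c\<in>C. card (Cons c ` {ys. c # ys \<in> A}))"
    by (subst A_eq, intro card_UN_disjoint) (use assms(2) in auto)
  also have "\<dots> = (\<Sum>c\<in>C. card {ys. c # ys \<in> A})"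
    by (simp add: card_image)
  finally show ?thesis .
qed

definition num_compositions :: "(nat \<Rightarrow> bool) \<Rightarrow> nat \<Rightarrow> nat \<Rightarrow> nat" where
  "num_compositions P r k = card {ys. length ys = r \<and> sum_list ys = k \<and> (\<forall>y\<in>set ys. P y)}"

lemma num_compositions_0: "num_compositions P 0 k = (if k = 0 then 1 else 0)"
proof -
  have "{ys. length ys = 0 \<and> sum_list ys = k \<and> (\<forall>y\<in>set ys. P y)} = (if k = 0 then {[]} else {})"
    by auto
  then show ?thesis unfolding num_compositions_def by simp
qed

lemma num_compositions_Suc:
  "num_compositions P (Suc r) k = (\<Sum>c\<in>{c. c \<le> k \<and> P c}. num_compositions P r (k - c))"
  unfolding num_compositions_def
  by (subst card_eq_sum_card_Cons[OF finite_lists_sum_eq, where C = "{c. c \<le> k \<and> P c}"])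
     (auto simp: length_Suc_conv intro!: sum.cong arg_cong[where f = card])

text \<open>A weak composition is determined by its \<open>j\<close> nonzero parts and their positions.\<close>
lemma num_compositions_insert_zeros:
  assumes "P 0"
  shows "num_compositions P r k = (\<Sum>j\<le>r. num_compositions (\<lambda>y. 0 < y \<and> P y) j k * (r choose j))"
proof (induction r arbitrary: k)
  case 0
  then show ?case by (simp add: num_compositions_0)
next
  case (Suc r)
  let ?Q = "num_compositions (\<lambda>y. 0 < y \<and> P y)"
  let ?S = "{c. c \<le> k \<and> 0 < c \<and> P c}"
  have "{c. c \<le> k \<and> P c} = insert 0 ?S"
    using assms by auto
  then have "num_compositions P (Suc r) k
               = num_compositions P r k + (\<Sum>c\<in>?S. num_compositions P r (k - c))"
    by (simp add: num_compositions_Suc)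
  also have "(\<Sum>c\<in>?S. num_compositions P r (k - c)) = (\<Sum>j\<le>r. (\<Sum>c\<in>?S. ?Q j (k - c)) * (r choose j))"
    by (simp add: Suc.IH sum_distrib_right sum.swap[of _ ?S])
  also have "\<dots> = (\<Sum>j\<le>r. ?Q (Suc j) k * (r choose j))"
    by (simp add: num_compositions_Suc)
  also have "num_compositions P r k = (\<Sum>j\<le>Suc r. ?Q j k * (r choose j))"
    by (simp add: Suc.IH)
  also have "\<dots> = ?Q 0 k + (\<Sum>j\<le>r. ?Q (Suc j) k * (r choose Suc j))"
    by (subst sum.atMost_Suc_shift) simp
  finally show ?case
    by (subst sum.atMost_Suc_shift) (simp add: sum.distrib algebra_simps)
qed

lemma headstrong_Cons: "headstrong (a # ys) \<longleftrightarrow> (\<forall>y\<in>set ys. y \<le> a)"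
  by (simp add: headstrong_def all_set_conv_all_nth All_less_Suc2)

lemma headstrong_map_mono: "mono f \<Longrightarrow> headstrong xs \<Longrightarrow> headstrong (map f xs)"
  by (auto simp: headstrong_def monoD)

lemma card_headstrong_eq_sum:
  "card {xs. length xs = Suc r \<and> sum_list xs = k \<and> headstrong xs \<and> (\<forall>x\<in>set xs. P x)}
     = (\<Sum>a\<in>{a. a \<le> k \<and> P a}. num_compositions (\<lambda>y. P y \<and> y \<le> a) r (k - a))"
  unfolding num_compositions_def
  by (subst card_eq_sum_card_Cons[OF finite_lists_sum_eq, where C = "{a. a \<le> k \<and> P a}"])
     (auto simp: length_Suc_conv headstrong_Cons intro!: sum.cong arg_cong[where f = card])

lemma H_eq_0: "n < m \<Longrightarrow> H n m = 0"
proof -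
  assume "n < m"
  then have no_lists: "{cs. is_composition n cs \<and> length cs = m \<and> headstrong cs} = {}"
    using length_le_sum_list_pos by (fastforce simp: is_composition_def)
  show "H n m = 0" unfolding H_def no_lists by simp
qed

lemma H_Suc: "H k (Suc j) = (\<Sum>a\<in>{1..k}. num_compositions (\<lambda>y. 0 < y \<and> y \<le> a) j (k - a))"
proof -
  have "{a. a \<le> k \<and> 0 < a} = {1..k}" by auto
  moreover have "{cs. is_composition k cs \<and> length cs = Suc j \<and> headstrong cs}
      = {xs. length xs = Suc j \<and> sum_list xs = k \<and> headstrong xs \<and> (\<forall>x\<in>set xs. 0 < x)}"
    by (auto simp: is_composition_def)
  ultimately show ?thesis
    unfolding H_def by (simp add: card_headstrong_eq_sum)
qed

lemma H_eq_card_weak: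
  assumes "m \<le> n"
  shows "H n m = card {xs. length xs = m \<and> sum_list xs = n - m \<and> headstrong xs}"
proof -
  let ?C = "{cs. is_composition n cs \<and> length cs = m \<and> headstrong cs}"
  let ?W = "{xs. length xs = m \<and> sum_list xs = n - m \<and> headstrong xs}"
  have mono_pred: "mono (\<lambda>c::nat. c - 1)" and mono_Suc: "mono Suc"
    by (auto simp: mono_def)
  have sum_list_map_Suc: "sum_list (map Suc xs) = sum_list xs + length xs" for xs
    using sum_list_Suc[of "\<lambda>x. x" xs] by simp
  have Suc_pred: "map Suc (map (\<lambda>c. c - 1) cs) = cs" if "cs \<in> ?C" for cs
    using that by (auto simp: is_composition_def intro!: map_idI)
  have "map Suc ` ?W \<subseteq> ?C"
    using assms by (auto simp: is_composition_def sum_list_map_Suc headstrong_map_mono[OF mono_Suc])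
  moreover have "map (\<lambda>c. c - 1) cs \<in> ?W" if cs: "cs \<in> ?C" for cs
  proof -
    have "n = sum_list (map Suc (map (\<lambda>c. c - 1) cs))"
      using cs by (simp only: Suc_pred[OF cs]) (simp add: is_composition_def)
    then have "sum_list (map (\<lambda>c. c - 1) cs) = n - m"
      using cs by (simp only: sum_list_map_Suc) simp
    moreover have "headstrong (map (\<lambda>c. c - 1) cs)"
      using cs headstrong_map_mono[OF mono_pred] by blast
    ultimately show ?thesis using cs by simp
  qed
  ultimately have "bij_betw (map Suc) ?W ?C"
    using Suc_pred by (intro bij_betw_byWitness[where f' = "map (\<lambda>c. c - 1)"]) (auto simp: o_def)
  then show ?thesis
    unfolding H_def by (simp add: bij_betw_same_card)
qed

lemma H_diag: "0 < n \<Longrightarrow> H n n = 1"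
proof -
  assume "0 < n"
  then have "{xs. length xs = n \<and> sum_list xs = 0 \<and> headstrong xs} = {replicate n 0}"
    by (auto simp: headstrong_def intro: replicate_eqI)
  then show ?thesis by (simp add: H_eq_card_weak)
qed

lemma H_1: "0 < n \<Longrightarrow> H n 1 = 1"
proof -
  assume "0 < n"
  have "{xs. length xs = 1 \<and> sum_list xs = n - 1 \<and> headstrong xs} = {[n - 1]}"
    by (auto simp: headstrong_def length_Suc_conv)
  with \<open>0 < n\<close> show ?thesis by (simp add: H_eq_card_weak)
qed

lemma H_recurrence:
  assumes "0 < k"
  shows "H (k + Suc r) (Suc r) = (\<Sum>j=1..k. H k j * (r choose (j - 1)))"
proof -
  have no_lists: "{ys. length ys = r \<and> sum_list ys = k \<and> (\<forall>y\<in>set ys. y = 0)} = {}"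
    using assms by (auto simp flip: sum_list_eq_0_iff)
  have zero_head: "num_compositions (\<lambda>y. y = 0) r k = 0"
    unfolding num_compositions_def no_lists by simp
  have "H (k + Suc r) (Suc r) = (\<Sum>a\<in>{a. a \<le> k}. num_compositions (\<lambda>y. y \<le> a) r (k - a))"
    using card_headstrong_eq_sum[where P = "\<lambda>_. True"] by (simp add: H_eq_card_weak)
  also have "\<dots> = (\<Sum>a\<in>{1..k}. num_compositions (\<lambda>y. y \<le> a) r (k - a))"
  proof -
    have "{a. a \<le> k} = insert 0 {1..k}" by auto
    then show ?thesis by (simp add: zero_head)
  qed
  also have "\<dots> = (\<Sum>a\<in>{1..k}. \<Sum>j\<le>r. num_compositions (\<lambda>y. 0 < y \<and> y \<le> a) j (k - a) * (r choose j))"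
    by (simp add: num_compositions_insert_zeros)
  also have "\<dots> = (\<Sum>j\<le>r. H k (Suc j) * (r choose j))"
    by (subst sum.swap) (simp add: H_Suc sum_distrib_right)
  also have "\<dots> = (\<Sum>j=1..Suc r. H k j * (r choose (j - 1)))"
    unfolding One_nat_def sum.shift_bounds_cl_Suc_ivl atMost_atLeast0 by simp
  also have "\<dots> = (\<Sum>j=1..k + r. H k j * (r choose (j - 1)))"
    using assms by (intro sum.mono_neutral_left) auto
  also have "\<dots> = (\<Sum>j=1..k. H k j * (r choose (j - 1)))"
    by (intro sum.mono_neutral_right) (auto simp: H_eq_0)
  finally show ?thesis .
qed

theorem mainTheorem10:
  fixes n m :: nat
  assumes "n > 0" and "m > 0"
  shows "(m > n \<longrightarrow> H n m = 0)
       \<and> (m = n \<longrightarrow> H n m = 1)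
       \<and> (m = 1 \<longrightarrow> H n m = 1)
       \<and> (n > m \<and> m > 1 \<longrightarrow> H n m = (\<Sum>j=1..n-m. H (n-m) j * ((m-1) choose (j-1))))"
proof (intro conjI impI)
  assume "n > m \<and> m > 1"
  then have "n = (n - m) + Suc (m - 1)" and "m = Suc (m - 1)" and "0 < n - m" by auto
  then show "H n m = (\<Sum>j=1..n-m. H (n-m) j * ((m-1) choose (j-1)))"
    using H_recurrence by metis
qed (use assms H_1 in \<open>auto simp: H_eq_0 H_diag\<close>)

end
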